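(* Let $I$ be a finite index set and $\{(x_i,f_i,g_i)\}_{i\in I}\subset\mathbb{R}^n\times\mathbb{R}\times\mathbb{R}^n$. The following are equivalent: (i) there exists a convex function $f:\mathbb{R}^n\to\mathbb{R}$ which is differentiable and strictly convex and satisfies $f_i=f(x_i)$, $g_i=\nabla f(x_i)$ for all $i\in I$; (ii) for every $i,j\in I$: $f_i-f_j-\langle g_j,x_i-x_j\rangle\ge0$; $f_i-f_j-\langle g_j,x_i-x_j\rangle>0$ if $x_i\ne x_j$; and $f_i-f_j-\langle g_j,x_i-x_j\rangle>0$ if $g_i\ne g_j$. *)

theory Defs
  imports "HOL-Analysis.Analysis"
begin

definition strictly_convex_on :: "'a::real_vector set \<Rightarrow> ('a \<Rightarrow> real) \<Rightarrow> bool" where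
  "strictly_convex_on S f \<longleftrightarrow> convex S \<and>
     (\<forall>x\<in>S. \<forall>y\<in>S. x \<noteq> y \<longrightarrow> (\<forall>t::real. 0 < t \<and> t < 1 \<longrightarrow>
        f ((1 - t) *\<^sub>R x + t *\<^sub>R y) < (1 - t) * f x + t * f y))"

end

theory Submission
  imports Defs
begin

text \<open>Necessity is the tangent-plane inequality of a differentiable convex function, which is
  strict away from the point of contact when the function is strictly convex; gradients taken at
  the same point coincide. For sufficiency, subtract \<open>c * (y \<bullet> y)\<close> from the data (for small
  \<open>c > 0\<close> the strict inequalities survive) and interpolate the new data by a smoothed maximum of
  the tangent planes \<open>y \<mapsto> f\<^sub>j + g\<^sub>j \<bullet> (y - x\<^sub>j)\<close>. The smoothing replaces \<open>\<bar>a - b\<bar>\<close> in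
  \<open>max a b = (a + b + \<bar>a - b\<bar>) / 2\<close> by its Huber regularisation of width \<open>\<delta>\<close>: this keeps
  convexity, yields differentiability, and leaves the maximum unchanged when one argument exceeds
  the other by \<open>\<delta>\<close>. At \<open>x\<^sub>i\<close> the plane of \<open>i\<close> exceeds every other plane by a fixed gap, so for
  small \<open>\<delta>\<close> the smoothed maximum coincides with that plane near \<open>x\<^sub>i\<close>. Adding \<open>c * (y \<bullet> y)\<close>
  back makes the interpolant strictly convex.\<close>

section \<open>Huber smoothing of the maximum\<close>

definition ramp_sq :: "real \<Rightarrow> real" where
  "ramp_sq s = (max s 0)\<^sup>2"

lemma ramp_sq_remainder: "\<bar>ramp_sq y - ramp_sq s - 2 * max s 0 * (y - s)\<bar> \<le> (y - s)\<^sup>2"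
proof (cases "0 \<le> s")
  case True
  then have "ramp_sq y - ramp_sq s - 2 * max s 0 * (y - s) = (y - s)\<^sup>2 - (min y 0)\<^sup>2"
    unfolding ramp_sq_def by (auto simp: max_def min_def power2_eq_square algebra_simps)
  moreover have "(min y 0)\<^sup>2 \<le> (y - s)\<^sup>2"
    using True by (intro abs_le_square_iff[THEN iffD1]) auto
  ultimately show ?thesis
    by simp
next
  case False
  then have "(max y 0)\<^sup>2 \<le> (y - s)\<^sup>2"
    by (intro abs_le_square_iff[THEN iffD1]) auto
  with False show ?thesis
    unfolding ramp_sq_def by simp
qed

lemma has_real_derivative_ramp_sq: "(ramp_sq has_real_derivative 2 * max s 0) (at s)"
proof -
  define R where "R y = ramp_sq y - ramp_sq s - 2 * max s 0 * (y - s)" for y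
  have "((\<lambda>y. R y / (y - s)) \<longlongrightarrow> 0) (at s)"
  proof (rule Lim_null_comparison)
    show "\<forall>\<^sub>F y in at s. norm (R y / (y - s)) \<le> \<bar>y - s\<bar>"
      using ramp_sq_remainder unfolding R_def
      by (auto simp: divide_le_eq power2_eq_square)
    show "((\<lambda>y. \<bar>y - s\<bar>) \<longlongrightarrow> 0) (at s)"
      by (auto intro!: tendsto_eq_intros)
  qed
  then have "((\<lambda>y. 2 * max s 0 + R y / (y - s)) \<longlongrightarrow> 2 * max s 0) (at s)"
    using tendsto_add[OF tendsto_const] by fastforce
  moreover have "\<forall>\<^sub>F y in at s. 2 * max s 0 + R y / (y - s) = (ramp_sq y - ramp_sq s) / (y - s)"
    by (auto simp: eventually_at_filter R_def field_simps)
  ultimately show ?thesis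
    unfolding has_field_derivative_iff by (rule Lim_transform_eventually)
qed

text \<open>Huber smoothing of the absolute value: it equals \<open>\<bar>t\<bar>\<close> for \<open>\<bar>t\<bar> \<ge> d\<close> and
  \<open>d/2 + t\<^sup>2/(2*d)\<close> for \<open>\<bar>t\<bar> \<le> d\<close>.\<close>
definition smooth_abs :: "real \<Rightarrow> real \<Rightarrow> real" where
  "smooth_abs d t = d / 2 + t\<^sup>2 / (2 * d) - (ramp_sq (t - d) + ramp_sq (- t - d)) / (2 * d)"

definition smooth_abs_deriv :: "real \<Rightarrow> real \<Rightarrow> real" where
  "smooth_abs_deriv d t = (t - max (t - d) 0 + max (- t - d) 0) / d"

lemma has_real_derivative_smooth_abs:
  assumes "d > 0"
  shows "(smooth_abs d has_real_derivative smooth_abs_deriv d t) (at t)"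
  using assms unfolding smooth_abs_def [abs_def]
  by (auto intro!: derivative_eq_intros DERIV_chain2[OF has_real_derivative_ramp_sq]
      simp: smooth_abs_deriv_def field_simps)

lemma smooth_abs_deriv_mono: "d > 0 \<Longrightarrow> s \<le> t \<Longrightarrow> smooth_abs_deriv d s \<le> smooth_abs_deriv d t"
  unfolding smooth_abs_deriv_def by (rule divide_right_mono) (auto simp: max_def)

lemma abs_smooth_abs_deriv_le_1: "d > 0 \<Longrightarrow> \<bar>smooth_abs_deriv d t\<bar> \<le> 1"
  unfolding smooth_abs_deriv_def by (auto simp: max_def abs_le_iff)

lemma convex_on_smooth_abs: "d > 0 \<Longrightarrow> convex_on UNIV (smooth_abs d)"
  by (rule convex_on_realI[where f' = "smooth_abs_deriv d"])
    (auto intro: has_real_derivative_smooth_abs smooth_abs_deriv_mono)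

lemma smooth_abs_minus: "smooth_abs d (- t) = smooth_abs d t"
  unfolding smooth_abs_def by (simp add: add.commute)

lemma smooth_abs_eq_abs:
  assumes "d > 0" "d \<le> \<bar>t\<bar>"
  shows "smooth_abs d t = \<bar>t\<bar>"
  using assms unfolding smooth_abs_def ramp_sq_def
  by (auto simp: max_def abs_if field_simps power2_eq_square)

lemma smooth_abs_le:
  assumes "d > 0"
  shows "smooth_abs d t \<le> \<bar>t\<bar> + d"
proof (cases "d \<le> \<bar>t\<bar>")
  case True
  then show ?thesis
    using smooth_abs_eq_abs assms by simp
next
  case False
  then have "smooth_abs d t = (d\<^sup>2 + t\<^sup>2) / (2 * d)"
    using assms by (auto simp: abs_less_iff smooth_abs_def ramp_sq_def max_def field_simps power2_eq_square)
  moreover have "d\<^sup>2 + t\<^sup>2 \<le> 2 * d * (\<bar>t\<bar> + d)"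
  proof -
    have "t\<^sup>2 \<le> d\<^sup>2" "0 \<le> 2 * d * \<bar>t\<bar>"
      using False abs_le_square_iff[of t d] assms by auto
    then show ?thesis
      by (simp add: distrib_left power2_eq_square)
  qed
  ultimately show ?thesis
    using assms by (simp add: pos_divide_le_eq mult.commute)
qed

lemma smooth_abs_lipschitz: "d > 0 \<Longrightarrow> \<bar>smooth_abs d s - smooth_abs d t\<bar> \<le> \<bar>s - t\<bar>"
  using field_differentiable_bound[of UNIV "smooth_abs d" "smooth_abs_deriv d" 1 s t]
    has_real_derivative_smooth_abs abs_smooth_abs_deriv_le_1
  by auto

definition smooth_max :: "real \<Rightarrow> real \<Rightarrow> real \<Rightarrow> real" where
  "smooth_max d a b = (a + b + smooth_abs d (a - b)) / 2"

lemma smooth_max_commute: "smooth_max d a b = smooth_max d b a"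
  using smooth_abs_minus[of d "a - b"] by (simp add: smooth_max_def add.commute)

lemma smooth_max_mono:
  assumes "d > 0" "a \<le> a'" "b \<le> b'"
  shows "smooth_max d a b \<le> smooth_max d a' b'"
proof -
  have "\<bar>(a - b) - (a' - b')\<bar> \<le> (a' - a) + (b' - b)"
    using assms(2,3) by (simp add: abs_le_iff)
  then have "smooth_abs d (a - b) \<le> smooth_abs d (a' - b') + (a' - a) + (b' - b)"
    using smooth_abs_lipschitz[OF assms(1), of "a - b" "a' - b'"] by linarith
  then have "a + b + smooth_abs d (a - b) \<le> a' + b' + smooth_abs d (a' - b')"
    by linarith
  then show ?thesis
    unfolding smooth_max_def by (rule divide_right_mono) simp
qed

lemma smooth_max_le: "d > 0 \<Longrightarrow> smooth_max d a b \<le> max a b + d"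
  using smooth_abs_le[of d "a - b"] unfolding smooth_max_def by (auto simp: max_def)

lemma smooth_max_eq_left: "d > 0 \<Longrightarrow> b + d \<le> a \<Longrightarrow> smooth_max d a b = a"
  using smooth_abs_eq_abs[of d "a - b"] unfolding smooth_max_def by simp

lemma smooth_max_convex:
  assumes "d > 0" "0 \<le> t" "t \<le> 1"
  shows "smooth_max d ((1 - t) * a + t * a') ((1 - t) * b + t * b')
    \<le> (1 - t) * smooth_max d a b + t * smooth_max d a' b'"
proof -
  have "(1 - t) * a + t * a' - ((1 - t) * b + t * b') = (1 - t) *\<^sub>R (a - b) + t *\<^sub>R (a' - b')"
    by (simp add: algebra_simps)
  then have "smooth_abs d ((1 - t) * a + t * a' - ((1 - t) * b + t * b'))
      \<le> (1 - t) * smooth_abs d (a - b) + t * smooth_abs d (a' - b')"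
    using convex_onD[OF convex_on_smooth_abs] assms by simp
  then show ?thesis
    unfolding smooth_max_def by (simp add: field_simps)
qed

fun smooth_Max :: "real \<Rightarrow> real list \<Rightarrow> real" where
  "smooth_Max d [] = 0"
| "smooth_Max d [a] = a"
| "smooth_Max d (a # b # r) = smooth_max d a (smooth_Max d (b # r))"

lemma smooth_Max_le:
  fixes d :: real
  assumes "d > 0" "as \<noteq> []" "\<forall>b\<in>set as. b \<le> M"
  shows "smooth_Max d as \<le> M + length as * d"
  using assms
proof (induction d as rule: smooth_Max.induct)
  case (3 d a b r)
  have "0 \<le> length (b # r) * d"
    using "3.prems"(1) by simp
  moreover have "a \<le> M" "smooth_Max d (b # r) \<le> M + length (b # r) * d"
    using 3 by auto
  ultimately have "max a (smooth_Max d (b # r)) \<le> M + length (b # r) * d"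
    by (intro max.boundedI) linarith+
  moreover have "length (a # b # r) * d = length (b # r) * d + d"
    by (simp add: algebra_simps)
  ultimately show ?case
    using smooth_max_le[OF "3.prems"(1), of a "smooth_Max d (b # r)"]
    unfolding smooth_Max.simps by linarith
qed auto

lemma smooth_Max_eq_dominant:
  fixes d :: real
  assumes "d > 0" and "\<forall>b\<in>set pre \<union> set post. b + length (pre @ a # post) * d \<le> a"
  shows "smooth_Max d (pre @ a # post) = a"
  using assms(2)
proof (induction pre)
  case Nil
  show ?case
  proof (cases post)
    case (Cons b r)
    have "smooth_Max d post \<le> (a - length (a # post) * d) + length post * d"
      using Nil Cons assms(1) by (intro smooth_Max_le) auto
    then show ?thesis
      using Cons smooth_max_eq_left[OF assms(1)] by (simp add: algebra_simps)
  qed simp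
next
  case (Cons p pre)
  have "length (pre @ a # post) * d \<le> length (p # pre @ a # post) * d"
    using assms(1) by simp
  then have "smooth_Max d (pre @ a # post) = a"
    using Cons by (intro Cons.IH) force
  moreover have "p + d \<le> a"
    using Cons.prems assms(1) by (fastforce intro: order_trans[rotated] mult_right_mono)
  ultimately show ?case
    using smooth_max_eq_left[OF assms(1)] smooth_max_commute by (cases "pre @ a # post") auto
qed

lemma convex_on_smooth_Max:
  fixes d :: real
  assumes "d > 0" "convex S" "\<And>l. l \<in> set ls \<Longrightarrow> convex_on S l"
  shows "convex_on S (\<lambda>y. smooth_Max d (map (\<lambda>l. l y) ls))"
  using assms(3)
proof (induction ls rule: induct_list012)
  case 1
  then show ?case
    using assms(2) by (simp add: convex_on_const)
next
  case (2 l)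
  then show ?case
    by simp
next
  case (3 l k ls)
  let ?M = "\<lambda>y. smooth_Max d (map (\<lambda>l. l y) (k # ls))"
  have "convex_on S ?M" "convex_on S l"
    using 3 by auto
  show ?case
  proof (rule convex_onI)
    fix t :: real and y z
    assume "0 < t" "t < 1" "y \<in> S" "z \<in> S"
    then have "smooth_max d (l ((1 - t) *\<^sub>R y + t *\<^sub>R z)) (?M ((1 - t) *\<^sub>R y + t *\<^sub>R z))
        \<le> smooth_max d ((1 - t) * l y + t * l z) ((1 - t) * ?M y + t * ?M z)"
      using \<open>convex_on S ?M\<close> \<open>convex_on S l\<close>
      by (intro smooth_max_mono[OF assms(1)] convex_onD) auto
    also have "\<dots> \<le> (1 - t) * smooth_max d (l y) (?M y) + t * smooth_max d (l z) (?M z)"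
      using \<open>0 < t\<close> \<open>t < 1\<close> by (intro smooth_max_convex[OF assms(1)]) auto
    finally show "smooth_Max d (map (\<lambda>l. l ((1 - t) *\<^sub>R y + t *\<^sub>R z)) (l # k # ls))
        \<le> (1 - t) * smooth_Max d (map (\<lambda>l. l y) (l # k # ls))
          + t * smooth_Max d (map (\<lambda>l. l z) (l # k # ls))"
      by simp
  qed (fact assms(2))
qed

lemma differentiable_smooth_Max:
  fixes d :: real
  assumes "d > 0" "\<And>l. l \<in> set ls \<Longrightarrow> l differentiable (at y)"
  shows "(\<lambda>y. smooth_Max d (map (\<lambda>l. l y) ls)) differentiable (at y)"
  using assms(2)
proof (induction ls rule: induct_list012)
  case (3 l k ls)
  let ?M = "\<lambda>y. smooth_Max d (map (\<lambda>l. l y) (k # ls))"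
  have M: "?M differentiable (at y)"
    using "3.prems" by (intro "3.IH"(2)) simp
  have l: "l differentiable (at y)"
    using "3.prems" by simp
  have "smooth_abs d differentiable (at (l y - ?M y))"
    using has_real_derivative_smooth_abs[OF assms(1)] real_differentiable_def by blast
  then have "(\<lambda>y. smooth_abs d (l y - ?M y)) differentiable (at y)"
    using differentiable_diff[OF l M] by (rule differentiable_compose)
  then have "(\<lambda>y. (l y + ?M y + smooth_abs d (l y - ?M y)) / 2) differentiable (at y)"
    using l M by simp
  then show ?case
    by (simp add: smooth_max_def)
qed auto

lemma smooth_Max_locally_eq_dominant:
  fixes d :: real and ls :: "('a::t2_space \<Rightarrow> real) list"
  assumes "d > 0" "distinct ls" "l \<in> set ls"
    and cont: "\<forall>k\<in>set ls. isCont k y"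
    and dominant: "\<forall>k\<in>set ls. k \<noteq> l \<longrightarrow> k y + length ls * d < l y"
  shows "smooth_Max d (map (\<lambda>k. k y) ls) = l y"
    and "\<forall>\<^sub>F z in at y. smooth_Max d (map (\<lambda>k. k z) ls) = l z"
proof -
  obtain pre post where ls: "ls = pre @ l # post"
    using split_list[OF assms(3)] by blast
  define K where "K = set pre \<union> set post"
  have K: "K = set ls - {l}"
    using assms(2) unfolding K_def ls by auto
  have eq: "smooth_Max d (map (\<lambda>k. k z) ls) = l z"
    if "\<forall>k\<in>K. k z + length ls * d < l z" for z
    using that unfolding ls K_def
    by (auto intro!: smooth_Max_eq_dominant[OF assms(1)] less_imp_le)
  show "smooth_Max d (map (\<lambda>k. k y) ls) = l y"
    using dominant by (intro eq) (simp add: K)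
  have "\<forall>k\<in>K. \<forall>\<^sub>F z in at y. length ls * d < l z - k z"
  proof
    fix k assume "k \<in> K"
    then have "((\<lambda>z. l z - k z) \<longlongrightarrow> l y - k y) (at y)"
      using cont assms(3) unfolding K isCont_def by (intro tendsto_diff) auto
    moreover have "length ls * d < l y - k y"
      using dominant \<open>k \<in> K\<close> unfolding K by force
    ultimately show "\<forall>\<^sub>F z in at y. length ls * d < l z - k z"
      by (rule order_tendstoD(1))
  qed
  then have "\<forall>\<^sub>F z in at y. \<forall>k\<in>K. k z + length ls * d < l z"
    unfolding K_def by (intro eventually_ball_finite) (auto simp: algebra_simps)
  then show "\<forall>\<^sub>F z in at y. smooth_Max d (map (\<lambda>k. k z) ls) = l z"
    by (rule eventually_mono) (rule eq)
qed

lemma has_derivative_smooth_Max_dominant: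
  fixes d :: real and ls :: "('a::real_normed_vector \<Rightarrow> real) list"
  assumes "d > 0" "distinct ls" "l \<in> set ls"
    and "\<forall>k\<in>set ls. isCont k y"
    and "\<forall>k\<in>set ls. k \<noteq> l \<longrightarrow> k y + length ls * d < l y"
    and "(l has_derivative D) (at y)"
  shows "((\<lambda>z. smooth_Max d (map (\<lambda>k. k z) ls)) has_derivative D) (at y)"
proof (rule has_derivative_transform_eventually[OF assms(6)])
  show "\<forall>\<^sub>F z in at y. l z = smooth_Max d (map (\<lambda>k. k z) ls)"
    using smooth_Max_locally_eq_dominant(2)[OF assms(1-5)] by (simp add: eq_commute)
  show "l y = smooth_Max d (map (\<lambda>k. k y) ls)"
    using smooth_Max_locally_eq_dominant(1)[OF assms(1-5)] by simp
qed simp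

section \<open>Smoothed maxima of tangent planes\<close>

lemma ex_pos_scale_less:
  fixes a b :: "'t \<Rightarrow> real"
  assumes "finite T" "\<And>t. t \<in> T \<Longrightarrow> 0 < b t"
  shows "\<exists>e>0. \<forall>t\<in>T. e * a t < b t"
proof -
  have "\<forall>t\<in>T. \<forall>\<^sub>F e in at_right 0. e * a t < b t"
  proof
    fix t assume "t \<in> T"
    have "((\<lambda>e. e * a t) \<longlongrightarrow> 0 * a t) (at_right 0)"
      by (intro tendsto_intros)
    then show "\<forall>\<^sub>F e in at_right 0. e * a t < b t"
      using assms(2)[OF \<open>t \<in> T\<close>] by (intro order_tendstoD(2)) auto
  qed
  then have "\<forall>\<^sub>F e in at_right 0. 0 < e \<and> (\<forall>t\<in>T. e * a t < b t)"
    using assms(1) by (intro eventually_conj eventually_at_right_less eventually_ball_finite)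
  then show ?thesis
    using eventually_happens'[OF trivial_limit_at_right_real] by blast
qed

lemma convex_on_affine_inner:
  fixes v w :: "'a::real_inner"
  shows "convex_on UNIV (\<lambda>y. c + v \<bullet> (y - w))"
proof (rule convex_onI)
  fix t :: real and y z :: 'a
  have "v \<bullet> ((1 - t) *\<^sub>R y + t *\<^sub>R z - w) = (1 - t) * (v \<bullet> (y - w)) + t * (v \<bullet> (z - w))"
    by (simp add: inner_diff_right inner_add_right algebra_simps)
  then show "c + v \<bullet> ((1 - t) *\<^sub>R y + t *\<^sub>R z - w) \<le> (1 - t) * (c + v \<bullet> (y - w)) + t * (c + v \<bullet> (z - w))"
    by (simp add: algebra_simps)
qed simp

lemma convex_smooth_interpolation:
  fixes x g :: "'i \<Rightarrow> 'a::real_inner" and fv :: "'i \<Rightarrow> real"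
  assumes "finite I"
    and separated: "\<And>i j. i \<in> I \<Longrightarrow> j \<in> I \<Longrightarrow> x i \<noteq> x j \<Longrightarrow> fv j + g j \<bullet> (x i - x j) < fv i"
    and consistent: "\<And>i j. i \<in> I \<Longrightarrow> j \<in> I \<Longrightarrow> x i = x j \<Longrightarrow> fv i = fv j \<and> g i = g j"
  shows "\<exists>F. convex_on UNIV F \<and> (\<forall>y. F differentiable (at y)) \<and>
    (\<forall>i\<in>I. fv i = F (x i) \<and> GDERIV F (x i) :> g i)"
proof -
  define tangent where "tangent i = (\<lambda>y. fv i + g i \<bullet> (y - x i))" for i
  have tangent_at: "tangent i (x i) = fv i" for i
    by (simp add: tangent_def)
  have "finite (tangent ` I)"
    using assms(1) by simp
  then obtain ls where ls: "set ls = tangent ` I" "distinct ls"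
    using finite_distinct_list by metis
  \<comment> \<open>\<open>\<delta>\<close> is chosen so that at \<open>x i\<close> the plane of \<open>i\<close> beats every other plane by more than
    the accumulated smoothing error \<open>length ls * \<delta>\<close>.\<close>
  define P where "P = {(i, j) \<in> I \<times> I. x i \<noteq> x j}"
  have "finite P"
    using assms(1) unfolding P_def by (auto intro: finite_subset)
  moreover have "\<And>t. t \<in> P \<Longrightarrow> 0 < (case t of (i, j) \<Rightarrow> fv i - tangent j (x i))"
    using separated unfolding P_def tangent_def by auto
  ultimately have "\<exists>\<delta>>0. \<forall>t\<in>P.
      \<delta> * real (length ls) < (case t of (i, j) \<Rightarrow> fv i - tangent j (x i))"
    by (rule ex_pos_scale_less)
  then obtain \<delta> :: real where "\<delta> > 0"
    and \<delta>: "\<forall>t\<in>P. \<delta> * real (length ls) < (case t of (i, j) \<Rightarrow> fv i - tangent j (x i))"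
    by blast
  define F where "F y = smooth_Max \<delta> (map (\<lambda>l. l y) ls)" for y
  have "convex_on UNIV F"
    unfolding F_def
    using ls(1) by (intro convex_on_smooth_Max[OF \<open>\<delta> > 0\<close>])
      (auto simp: tangent_def convex_on_affine_inner)
  moreover have "F differentiable (at y)" for y
    unfolding F_def
    using ls(1) by (intro differentiable_smooth_Max[OF \<open>\<delta> > 0\<close>]) (auto simp: tangent_def)
  moreover have "fv i = F (x i) \<and> GDERIV F (x i) :> g i" if "i \<in> I" for i
  proof -
    have dominant: "\<forall>k\<in>set ls. k \<noteq> tangent i \<longrightarrow> k (x i) + length ls * \<delta> < tangent i (x i)"
    proof (intro ballI impI)
      fix k assume "k \<in> set ls" "k \<noteq> tangent i"
      then obtain j where "j \<in> I" "k = tangent j"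
        using ls(1) by auto
      moreover have "x i \<noteq> x j"
        using consistent[OF \<open>i \<in> I\<close> \<open>j \<in> I\<close>] \<open>k \<noteq> tangent i\<close> \<open>k = tangent j\<close>
        by (auto simp: tangent_def)
      ultimately show "k (x i) + length ls * \<delta> < tangent i (x i)"
        using \<delta> \<open>i \<in> I\<close> unfolding P_def by (auto simp: tangent_at algebra_simps)
    qed
    have mem: "tangent i \<in> set ls" and cont: "\<forall>k\<in>set ls. isCont k (x i)"
      using ls(1) \<open>i \<in> I\<close> by (auto simp: tangent_def)
    have "(tangent i has_derivative (\<lambda>h. h \<bullet> g i)) (at (x i))"
      unfolding tangent_def by (auto intro!: derivative_eq_intros simp: inner_commute)
    then show ?thesis
      using smooth_Max_locally_eq_dominant(1)[OF \<open>\<delta> > 0\<close> ls(2) mem cont dominant]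
        has_derivative_smooth_Max_dominant[OF \<open>\<delta> > 0\<close> ls(2) mem cont dominant]
      by (simp add: F_def [abs_def] gderiv_def tangent_at)
  qed
  ultimately show ?thesis
    by (intro exI[of _ F]) blast
qed

section \<open>Tangent-plane inequalities and strict convexity\<close>

lemma convex_on_gderiv_tangent_le:
  fixes f :: "'a::real_inner \<Rightarrow> real"
  assumes "convex_on UNIV f" "GDERIV f x :> g"
  shows "f x + g \<bullet> (y - x) \<le> f y"
proof -
  define \<phi> where "\<phi> t = f (x + t *\<^sub>R (y - x))" for t :: real
  have "convex_on UNIV \<phi>"
  proof (rule convex_onI)
    fix t a b :: real
    have "x + ((1 - t) *\<^sub>R a + t *\<^sub>R b) *\<^sub>R (y - x) =
        (1 - t) *\<^sub>R (x + a *\<^sub>R (y - x)) + t *\<^sub>R (x + b *\<^sub>R (y - x))"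
      by (simp add: algebra_simps)
    moreover assume "0 < t" "t < 1"
    ultimately show "\<phi> ((1 - t) *\<^sub>R a + t *\<^sub>R b) \<le> (1 - t) * \<phi> a + t * \<phi> b"
      unfolding \<phi>_def using convex_onD[OF assms(1), of t] by simp
  qed simp
  moreover have "(\<phi> has_real_derivative g \<bullet> (y - x)) (at 0)"
  proof -
    have "((\<lambda>t. x + t *\<^sub>R (y - x)) has_derivative (\<lambda>t. t *\<^sub>R (y - x))) (at 0)"
      by (auto intro!: derivative_eq_intros)
    moreover have "(f has_derivative (\<lambda>h. h \<bullet> g)) (at (x + 0 *\<^sub>R (y - x)))"
      using assms(2) by (simp add: gderiv_def)
    ultimately have "(\<phi> has_derivative (\<lambda>t. (t *\<^sub>R (y - x)) \<bullet> g)) (at 0)"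
      unfolding \<phi>_def by (rule has_derivative_compose[unfolded o_def])
    then show ?thesis
      by (simp add: has_field_derivative_def inner_commute mult_commute_abs)
  qed
  ultimately have "g \<bullet> (y - x) * (1 - 0) \<le> \<phi> 1 - \<phi> 0"
    by (intro convex_on_imp_above_tangent[of UNIV]) auto
  then show ?thesis
    unfolding \<phi>_def by simp
qed

lemma strictly_convex_on_imp_convex_on:
  assumes "strictly_convex_on S f"
  shows "convex_on S f"
proof (rule convex_onI)
  fix t :: real and a b
  assume "0 < t" "t < 1" "a \<in> S" "b \<in> S"
  then show "f ((1 - t) *\<^sub>R a + t *\<^sub>R b) \<le> (1 - t) * f a + t * f b"
    using assms unfolding strictly_convex_on_def
    by (cases "a = b") (auto simp: scaleR_collapse algebra_simps intro: less_imp_le)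
next
  show "convex S"
    using assms unfolding strictly_convex_on_def by simp
qed

lemma strictly_convex_on_gderiv_tangent_less:
  fixes f :: "'a::real_inner \<Rightarrow> real"
  assumes "strictly_convex_on UNIV f" "GDERIV f x :> g" "y \<noteq> x"
  shows "f x + g \<bullet> (y - x) < f y"
proof -
  define m where "m = (1 - 1 / 2) *\<^sub>R x + (1 / 2 :: real) *\<^sub>R y"
  have "\<forall>t. 0 < t \<and> t < 1 \<longrightarrow> f ((1 - t) *\<^sub>R x + t *\<^sub>R y) < (1 - t) * f x + t * f y"
    using assms(1,3) unfolding strictly_convex_on_def by auto
  from this[rule_format, of "1 / 2"] have "f m < (1 - 1 / 2) * f x + 1 / 2 * f y"
    unfolding m_def by simp
  moreover have "f x + g \<bullet> (m - x) \<le> f m"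
    using strictly_convex_on_imp_convex_on[OF assms(1)] assms(2)
    by (rule convex_on_gderiv_tangent_le)
  moreover have "g \<bullet> (m - x) = g \<bullet> (y - x) / 2"
    unfolding m_def by (simp add: inner_diff_right inner_add_right algebra_simps)
  ultimately show ?thesis
    by simp
qed

lemma gderiv_unique:
  assumes "GDERIV f x :> g" "GDERIV f x :> g'"
  shows "g = g'"
proof -
  have "(\<lambda>h. h \<bullet> g) = (\<lambda>h. h \<bullet> g')"
    using assms unfolding gderiv_def by (rule has_derivative_unique)
  then have "(g - g') \<bullet> g = (g - g') \<bullet> g'"
    by metis
  then have "(g - g') \<bullet> (g - g') = 0"
    by (simp add: inner_diff_right)
  then show ?thesis
    by simp
qed

lemma inner_convex_combination_self:
  fixes a b :: "'a::real_inner"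
  shows "((1 - t) *\<^sub>R a + t *\<^sub>R b) \<bullet> ((1 - t) *\<^sub>R a + t *\<^sub>R b) =
    (1 - t) * (a \<bullet> a) + t * (b \<bullet> b) - t * (1 - t) * ((a - b) \<bullet> (a - b))"
  by (simp add: inner_add_left inner_add_right inner_diff_left inner_diff_right inner_commute
      algebra_simps)

lemma strictly_convex_on_add_inner_self:
  fixes F :: "'a::real_inner \<Rightarrow> real"
  assumes "convex_on S F" "c > 0"
  shows "strictly_convex_on S (\<lambda>y. F y + c * (y \<bullet> y))"
  unfolding strictly_convex_on_def
proof (intro conjI ballI impI allI)
  show "convex S"
    using assms(1) by (rule convex_on_imp_convex)
  fix a b and t :: real
  assume "a \<in> S" "b \<in> S" "a \<noteq> b" "0 < t \<and> t < 1"
  then have convex: "F ((1 - t) *\<^sub>R a + t *\<^sub>R b) \<le> (1 - t) * F a + t * F b"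
    and gain: "0 < c * (t * (1 - t) * ((a - b) \<bullet> (a - b)))"
    using convex_onD[OF assms(1)] assms(2) by auto
  have "c * ((1 - t) * (a \<bullet> a) + t * (b \<bullet> b) - t * (1 - t) * ((a - b) \<bullet> (a - b)))
      = (1 - t) * (c * (a \<bullet> a)) + t * (c * (b \<bullet> b)) - c * (t * (1 - t) * ((a - b) \<bullet> (a - b)))"
    "(1 - t) * (F a + c * (a \<bullet> a)) + t * (F b + c * (b \<bullet> b))
      = (1 - t) * F a + t * F b + ((1 - t) * (c * (a \<bullet> a)) + t * (c * (b \<bullet> b)))"
    by (simp_all add: algebra_simps)
  with convex gain
  show "F ((1 - t) *\<^sub>R a + t *\<^sub>R b) + c * (((1 - t) *\<^sub>R a + t *\<^sub>R b) \<bullet> ((1 - t) *\<^sub>R a + t *\<^sub>R b))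
      < (1 - t) * (F a + c * (a \<bullet> a)) + t * (F b + c * (b \<bullet> b))"
    unfolding inner_convex_combination_self by argo
qed

lemma gderiv_inner_self: "GDERIV (\<lambda>y. c * (y \<bullet> y)) y :> (2 * c) *\<^sub>R y"
proof -
  have "((\<lambda>y. c * (y \<bullet> y)) has_derivative (\<lambda>h. c * (h \<bullet> y + y \<bullet> h))) (at y)"
    by (auto intro!: derivative_eq_intros)
  then show ?thesis
    by (simp add: gderiv_def inner_commute algebra_simps)
qed

lemma strictly_convex_interpolation_add_inner_self:
  fixes F :: "'a::real_inner \<Rightarrow> real" and x g :: "'i \<Rightarrow> 'a"
  assumes "convex_on UNIV F" "\<And>y. F differentiable (at y)"
    and F: "\<And>i. i \<in> I \<Longrightarrow> fv i - c * (x i \<bullet> x i) = F (x i) \<and> GDERIV F (x i) :> g i - (2 * c) *\<^sub>R x i"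
    and "c > 0"
  shows "\<exists>f. convex_on UNIV f \<and> (\<forall>y. f differentiable (at y)) \<and> strictly_convex_on UNIV f \<and>
    (\<forall>i\<in>I. fv i = f (x i) \<and> GDERIV f (x i) :> g i)"
proof -
  define f where "f y = F y + c * (y \<bullet> y)" for y
  have "strictly_convex_on UNIV f"
    unfolding f_def [abs_def] using assms(1) \<open>c > 0\<close> by (rule strictly_convex_on_add_inner_self)
  moreover have "f differentiable (at y)" for y
  proof -
    have "(\<lambda>y. c * (y \<bullet> y)) differentiable (at y)"
      using gderiv_inner_self[of c y] unfolding gderiv_def differentiable_def by blast
    then show ?thesis
      using assms(2)[of y] unfolding f_def [abs_def] by simp
  qed
  moreover have "fv i = f (x i) \<and> GDERIV f (x i) :> g i" if "i \<in> I" for i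
  proof -
    have "GDERIV f (x i) :> (g i - (2 * c) *\<^sub>R x i) + (2 * c) *\<^sub>R x i"
      unfolding f_def [abs_def] using F[OF that] by (intro GDERIV_add gderiv_inner_self) auto
    then show ?thesis
      using F[OF that] by (simp add: f_def)
  qed
  ultimately show ?thesis
    using strictly_convex_on_imp_convex_on by metis
qed

lemma strictly_convex_smooth_interpolation:
  fixes x g :: "'i \<Rightarrow> 'a::real_inner" and fv :: "'i \<Rightarrow> real"
  assumes "finite I"
    and separated: "\<And>i j. i \<in> I \<Longrightarrow> j \<in> I \<Longrightarrow> x i \<noteq> x j \<Longrightarrow> fv j + g j \<bullet> (x i - x j) < fv i"
    and consistent: "\<And>i j. i \<in> I \<Longrightarrow> j \<in> I \<Longrightarrow> x i = x j \<Longrightarrow> fv i = fv j \<and> g i = g j"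
  shows "\<exists>f. convex_on UNIV f \<and> (\<forall>y. f differentiable (at y)) \<and> strictly_convex_on UNIV f \<and>
    (\<forall>i\<in>I. fv i = f (x i) \<and> GDERIV f (x i) :> g i)"
proof -
  define gap where "gap i j = fv i - fv j - g j \<bullet> (x i - x j)" for i j
  define P where "P = {(i, j) \<in> I \<times> I. x i \<noteq> x j}"
  have "finite P"
    using assms(1) unfolding P_def by (auto intro: finite_subset)
  moreover have "\<And>t. t \<in> P \<Longrightarrow> 0 < (case t of (i, j) \<Rightarrow> gap i j)"
    using separated unfolding P_def gap_def by (auto simp: algebra_simps)
  ultimately have "\<exists>c>0. \<forall>t\<in>P. c * (case t of (i, j) \<Rightarrow> (x i - x j) \<bullet> (x i - x j))
      < (case t of (i, j) \<Rightarrow> gap i j)"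
    by (rule ex_pos_scale_less)
  then obtain c :: real where "c > 0"
    and c: "\<And>i j. i \<in> I \<Longrightarrow> j \<in> I \<Longrightarrow> x i \<noteq> x j \<Longrightarrow> c * ((x i - x j) \<bullet> (x i - x j)) < gap i j"
    unfolding P_def by auto
  define fv' where "fv' i = fv i - c * (x i \<bullet> x i)" for i
  define g' where "g' i = g i - (2 * c) *\<^sub>R x i" for i
  have gap': "fv' i - fv' j - g' j \<bullet> (x i - x j) = gap i j - c * ((x i - x j) \<bullet> (x i - x j))" for i j
    unfolding fv'_def g'_def gap_def
    by (simp add: inner_diff_left inner_diff_right inner_commute algebra_simps)
  have "fv' j + g' j \<bullet> (x i - x j) < fv' i" if "i \<in> I" "j \<in> I" "x i \<noteq> x j" for i j
    using c[OF that] gap'[of i j] by simp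
  moreover have "fv' i = fv' j \<and> g' i = g' j" if "i \<in> I" "j \<in> I" "x i = x j" for i j
    using consistent[OF that] that(3) by (simp add: fv'_def g'_def)
  ultimately have "\<exists>F. convex_on UNIV F \<and> (\<forall>y. F differentiable (at y)) \<and>
      (\<forall>i\<in>I. fv' i = F (x i) \<and> GDERIV F (x i) :> g' i)"
    by (rule convex_smooth_interpolation[OF assms(1)])
  then obtain F where "convex_on UNIV F" "\<And>y. F differentiable (at y)"
    "\<And>i. i \<in> I \<Longrightarrow> fv' i = F (x i) \<and> GDERIV F (x i) :> g' i"
    by metis
  then show ?thesis
    using \<open>c > 0\<close> unfolding fv'_def g'_def by (rule strictly_convex_interpolation_add_inner_self)
qed

theorem proposition4p2:
  fixes I :: "'i set"
    and x :: "'i \<Rightarrow> real ^ 'n"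
    and fv :: "'i \<Rightarrow> real"
    and g :: "'i \<Rightarrow> real ^ 'n"
  assumes "finite I"
  shows "(\<exists>f :: real ^ 'n \<Rightarrow> real.
            convex_on UNIV f \<and> (\<forall>y. f differentiable (at y)) \<and>
            strictly_convex_on UNIV f \<and>
            (\<forall>i\<in>I. fv i = f (x i) \<and> GDERIV f (x i) :> g i))
     \<longleftrightarrow>
         (\<forall>i\<in>I. \<forall>j\<in>I.
            fv i - fv j - g j \<bullet> (x i - x j) \<ge> 0 \<and>
            (x i \<noteq> x j \<longrightarrow> fv i - fv j - g j \<bullet> (x i - x j) > 0) \<and>
            (g i \<noteq> g j \<longrightarrow> fv i - fv j - g j \<bullet> (x i - x j) > 0))"
    (is "?interpolable \<longleftrightarrow> (\<forall>i\<in>I. \<forall>j\<in>I. ?conditions i j)")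
proof
  assume ?interpolable
  then obtain f where "convex_on UNIV f" "strictly_convex_on UNIV f"
    and f: "\<And>i. i \<in> I \<Longrightarrow> fv i = f (x i) \<and> GDERIV f (x i) :> g i"
    by blast
  show "\<forall>i\<in>I. \<forall>j\<in>I. ?conditions i j"
  proof (intro ballI)
    fix i j assume "i \<in> I" "j \<in> I"
    then have "g i \<noteq> g j \<Longrightarrow> x i \<noteq> x j"
      using f gderiv_unique by metis
    with f[OF \<open>i \<in> I\<close>] f[OF \<open>j \<in> I\<close>] show "?conditions i j"
      using convex_on_gderiv_tangent_le[OF \<open>convex_on UNIV f\<close>, of "x j" "g j" "x i"]
        strictly_convex_on_gderiv_tangent_less[OF \<open>strictly_convex_on UNIV f\<close>, of "x j" "g j" "x i"]
      by auto
  qed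
next
  assume conditions: "\<forall>i\<in>I. \<forall>j\<in>I. ?conditions i j"
  have "fv i = fv j \<and> g i = g j" if "i \<in> I" "j \<in> I" "x i = x j" for i j
  proof -
    have "?conditions i j" "?conditions j i"
      using conditions that(1,2) by blast+
    then show ?thesis
      using that(3) by auto
  qed
  moreover have "fv j + g j \<bullet> (x i - x j) < fv i" if "i \<in> I" "j \<in> I" "x i \<noteq> x j" for i j
    using conditions that by (auto simp: algebra_simps)
  ultimately show ?interpolable
    using strictly_convex_smooth_interpolation[OF assms] by blast
qed

end
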